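(* Every element of ${\rm BrM}({\rm G}_2)$ can be written in one of the following forms: (i) $\delta^k u e_i v w$ with $i\in\{0,1\}$, $u\in D_i$, $v\in K_i$, $w\in D_i^{\rm op}$ and $k\in\mathbb{Z}$; or (ii) $\delta^k a$ with $a\in W({\rm G}_2)$ and $k\in\mathbb{Z}$. In particular, ${\rm Br}({\rm G}_2)$ is spanned over $\mathbb{Z}[\delta^{\pm1}]$ by $39$ elements.
   Context: Let $\delta$ be an indeterminate. ${\rm Br}({\rm G}_2)$ is the $\mathbb{Z}[\delta^{\pm1}]$-algebra generated by $r_0,r_1,e_0,e_1$ subject to the following relations: - $r_0^2=r_1^2=1$; - $r_ie_i=e_ir_i=e_i$ for $i=0,1$; - $e_0^2=\delta^3e_0$ and $e_1^2=\delta e_1$; - $r_0e_1e_0=r_1e_0$ and $e_0e_1r_0=e_0r_1$; - $e_1r_0e_1r_0e_1=e_1$ and $e_1r_0e_1r_0r_1=e_1r_0r_1r_0$; - $e_0r_1e_0=\delta^2e_0$; - $r_1r_0e_1r_0e_1=r_0r_1r_0e_1$; - $(r_1r_0)^6=1$. ${\rm BrM}({\rm G}_2)$ is the submonoid of the multiplicative monoid of ${\rm Br}({\rm G}_2)$ generated by $\delta,\delta^{-1},r_0,r_1,e_0,e_1$. Let $\Psi$ be a root system of type ${\rm G}_2$ with simple roots $\beta_0$ (short) and $\beta_1$ (long), and positive roots $\Psi^+$. $W({\rm G}_2)$ is generated by the reflections $s_0,s_1$ in $\beta_0,\beta_1$. It acts on $\Psi^+$ by $w\cdot\beta=$ the unique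 element of $\Psi^+\cap\{\pm w\beta\}$. The subgroup of units generated by $r_0,r_1$ is isomorphic to $W({\rm G}_2)$ via $r_i\mapsto s_i$, and elements of $W({\rm G}_2)$ are identified with their images. For $i\in\{0,1\}$: - $N_i$ is the stabilizer of $\beta_i$ in $W({\rm G}_2)$ under this action; - $D_i$ is a set of left coset representatives for $N_i$ in $W({\rm G}_2)$; - $K_0=\{1\}$, and $K_1$ is the subgroup generated by $r_0r_1r_0r_1r_0$; - $D_i^{\rm op}=\{d^{\rm op}\mid d\in D_i\}$, where ${\rm op}$ is the anti-involution of ${\rm Br}({\rm G}_2)$ fixing $\delta,r_0,r_1,e_0,e_1$ (so $d^{\rm op}=d^{-1}$ for $d\in W({\rm G}_2)$). *)

theory Defs
  imports Main
begin

text \<open>Roots are written in coordinates (a,b) meaning a*beta0 + b*beta1,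
  beta0 short, beta1 long.\<close>

definition g2_refl :: "nat \<Rightarrow> int \<times> int \<Rightarrow> int \<times> int" where
  "g2_refl i = (if i = 0 then (\<lambda>(a, b). (3 * b - a, b)) else (\<lambda>(a, b). (a, a - b)))"

text \<open>Action of a word [i1,...,ik] as s_{i1} o ... o s_{ik} (letter 0 = s0, any other = s1).\<close>
definition g2_word :: "nat list \<Rightarrow> int \<times> int \<Rightarrow> int \<times> int" where
  "g2_word ws = foldr (\<lambda>i f. g2_refl i \<circ> f) ws id"

definition G2_W :: "(int \<times> int \<Rightarrow> int \<times> int) set" where
  "G2_W = {g2_word ws | ws. True}"

definition G2_pos :: "(int \<times> int) set" where
  "G2_pos = {(1,0), (0,1), (1,1), (2,1), (3,1), (3,2)}"

definition g2_simple :: "nat \<Rightarrow> int \<times> int" where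
  "g2_simple i = (if i = 0 then (1, 0) else (0, 1))"

definition g2_act :: "(int \<times> int \<Rightarrow> int \<times> int) \<Rightarrow> int \<times> int \<Rightarrow> int \<times> int" where
  "g2_act w \<beta> = (THE \<gamma>. \<gamma> \<in> G2_pos \<and> (\<gamma> = w \<beta> \<or> \<gamma> = (- fst (w \<beta>), - snd (w \<beta>))))"

definition G2_N :: "nat \<Rightarrow> (int \<times> int \<Rightarrow> int \<times> int) set" where
  "G2_N i = {w \<in> G2_W. g2_act w (g2_simple i) = g2_simple i}"

definition left_coset_reps :: "(int \<times> int \<Rightarrow> int \<times> int) set \<Rightarrow> (int \<times> int \<Rightarrow> int \<times> int) set \<Rightarrow> bool" where
  "left_coset_reps D N \<longleftrightarrow> D \<subseteq> G2_W \<and> (\<forall>w\<in>G2_W. \<exists>!d. d \<in> D \<and> (\<exists>n\<in>N. w = d \<circ> n))"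

definition G2_K :: "nat \<Rightarrow> (int \<times> int \<Rightarrow> int \<times> int) set" where
  "G2_K i = (if i = 0 then {id} else {(g2_word [0,1,0,1,0]) ^^ n | n. True})"

definition op_set :: "(int \<times> int \<Rightarrow> int \<times> int) set \<Rightarrow> (int \<times> int \<Rightarrow> int \<times> int) set" where
  "op_set D = {w \<in> G2_W. \<exists>d\<in>D. w \<circ> d = id}"

definition alg_word :: "'a::monoid_mult \<Rightarrow> 'a \<Rightarrow> nat list \<Rightarrow> 'a" where
  "alg_word r0 r1 ws = prod_list (map (\<lambda>i. if i = 0 then r0 else r1) ws)"

definition br_G2_rels :: "'a::ring_1 \<Rightarrow> 'a \<Rightarrow> 'a \<Rightarrow> 'a \<Rightarrow> 'a \<Rightarrow> 'a \<Rightarrow> bool" where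
  "br_G2_rels d d' r0 r1 e0 e1 \<longleftrightarrow>
     d * d' = 1 \<and> d' * d = 1 \<and> (\<forall>x. d * x = x * d) \<and>
     r0 * r0 = 1 \<and> r1 * r1 = 1 \<and>
     r0 * e0 = e0 \<and> e0 * r0 = e0 \<and> r1 * e1 = e1 \<and> e1 * r1 = e1 \<and>
     e0 * e0 = d ^ 3 * e0 \<and> e1 * e1 = d * e1 \<and>
     r0 * e1 * e0 = r1 * e0 \<and> e0 * e1 * r0 = e0 * r1 \<and>
     e1 * r0 * e1 * r0 * e1 = e1 \<and> e1 * r0 * e1 * r0 * r1 = e1 * r0 * r1 * r0 \<and>
     e0 * r1 * e0 = d ^ 2 * e0 \<and>
     r1 * r0 * e1 * r0 * e1 = r0 * r1 * r0 * e1 \<and>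
     (r1 * r0) ^ 6 = 1"

definition dpow :: "'a::monoid_mult \<Rightarrow> 'a \<Rightarrow> int \<Rightarrow> 'a" where
  "dpow d d' k = (if k \<ge> 0 then d ^ nat k else d' ^ nat (- k))"

inductive_set brM :: "'a::monoid_mult \<Rightarrow> 'a \<Rightarrow> 'a \<Rightarrow> 'a \<Rightarrow> 'a \<Rightarrow> 'a \<Rightarrow> 'a set"
  for d d' r0 r1 e0 e1 where
  one: "1 \<in> brM d d' r0 r1 e0 e1"
| gen: "x \<in> brM d d' r0 r1 e0 e1 \<Longrightarrow> g \<in> {d, d', r0, r1, e0, e1} \<Longrightarrow> g * x \<in> brM d d' r0 r1 e0 e1"

inductive_set laurent_scalars :: "'a::ring_1 \<Rightarrow> 'a \<Rightarrow> 'a set" for d d' where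
  one: "1 \<in> laurent_scalars d d'"
| d: "d \<in> laurent_scalars d d'"
| d': "d' \<in> laurent_scalars d d'"
| neg: "x \<in> laurent_scalars d d' \<Longrightarrow> - x \<in> laurent_scalars d d'"
| add: "x \<in> laurent_scalars d d' \<Longrightarrow> y \<in> laurent_scalars d d' \<Longrightarrow> x + y \<in> laurent_scalars d d'"
| mult: "x \<in> laurent_scalars d d' \<Longrightarrow> y \<in> laurent_scalars d d' \<Longrightarrow> x * y \<in> laurent_scalars d d'"

inductive_set gen_alg :: "'a::ring_1 \<Rightarrow> 'a \<Rightarrow> 'a \<Rightarrow> 'a \<Rightarrow> 'a \<Rightarrow> 'a \<Rightarrow> 'a set"
  for d d' r0 r1 e0 e1 where
  base: "g \<in> {1, d, d', r0, r1, e0, e1} \<Longrightarrow> g \<in> gen_alg d d' r0 r1 e0 e1"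
| neg: "x \<in> gen_alg d d' r0 r1 e0 e1 \<Longrightarrow> - x \<in> gen_alg d d' r0 r1 e0 e1"
| add: "x \<in> gen_alg d d' r0 r1 e0 e1 \<Longrightarrow> y \<in> gen_alg d d' r0 r1 e0 e1 \<Longrightarrow> x + y \<in> gen_alg d d' r0 r1 e0 e1"
| mult: "x \<in> gen_alg d d' r0 r1 e0 e1 \<Longrightarrow> y \<in> gen_alg d d' r0 r1 e0 e1 \<Longrightarrow> x * y \<in> gen_alg d d' r0 r1 e0 e1"

end

theory Submission
  imports Defs
begin

text \<open>Up to powers of d, every monomial in the generators equals one of 39 words: the twelve
  elements of the dihedral group W(G2) and 27 words u e_i v. This is certified by a table saying
  that a generator times one of the 39 words is a power of d times another one; each entry follows
  by rewriting with the defining relations. As d is central, the 39 words span the algebra.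
  To bring u e_i v into the stated form, write u = a n with a in D_i and n in the stabiliser N_i
  of beta_i, and do the same for the inverse of the right factor: an element of N_i passes through
  e_i at the price of an element of K_i, which is checked on the four elements of N_i.\<close>

section \<open>The Weyl group of type G2\<close>

lemma g2_word_Nil [simp]: "g2_word [] = id"
  by (simp add: g2_word_def)

lemma g2_word_Cons [simp]: "g2_word (i # ws) = g2_refl i \<circ> g2_word ws"
  by (simp add: g2_word_def)

lemma g2_word_append: "g2_word (us @ vs) = g2_word us \<circ> g2_word vs"
  by (induct us) (simp_all add: comp_assoc)

lemma g2_refl_involution: "g2_refl i \<circ> g2_refl i = id"
  by (auto simp: g2_refl_def fun_eq_iff)

lemma g2_refl_other: "i \<noteq> 0 \<Longrightarrow> g2_refl i = g2_refl 1"
  by (simp add: g2_refl_def)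

lemma g2_word_rev_comp: "g2_word (rev ws) \<circ> g2_word ws = id"
proof (induct ws)
  case (Cons i ws)
  have "g2_word (rev (i # ws)) \<circ> g2_word (i # ws)
      = g2_word (rev ws) \<circ> ((g2_refl i \<circ> g2_refl i) \<circ> g2_word ws)"
    by (simp only: rev.simps g2_word_append g2_word_Cons g2_word_Nil comp_id comp_assoc)
  also have "\<dots> = id"
    by (simp only: g2_refl_involution id_comp Cons)
  finally show ?case .
qed simp

lemma g2_word_comp_rev: "g2_word ws \<circ> g2_word (rev ws) = id"
  using g2_word_rev_comp[of "rev ws"] by simp

lemma g2_word_rev_cong:
  assumes "g2_word us = g2_word vs"
  shows "g2_word (rev us) = g2_word (rev vs)"
proof -
  have "g2_word (rev us) = g2_word (rev us) \<circ> (g2_word vs \<circ> g2_word (rev vs))"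
    by (simp add: g2_word_comp_rev)
  also have "\<dots> = g2_word (rev vs)"
    by (simp only: assms[symmetric] comp_assoc[symmetric] g2_word_rev_comp id_comp)
  finally show ?thesis .
qed

lemma g2_word_linear:
  "g2_word ws (a, b) = (a * fst (g2_word ws (1, 0)) + b * fst (g2_word ws (0, 1)),
                        a * snd (g2_word ws (1, 0)) + b * snd (g2_word ws (0, 1)))"
proof (induct ws)
  case (Cons i ws)
  show ?case
    by (simp only: g2_word_Cons comp_apply Cons) (simp add: g2_refl_def split_def algebra_simps)
qed simp

lemma g2_word_eqI:
  assumes "g2_word us (1, 0) = g2_word vs (1, 0)" and "g2_word us (0, 1) = g2_word vs (0, 1)"
  shows "g2_word us = g2_word vs"
proof
  fix x :: "int \<times> int"
  obtain a b where "x = (a, b)"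
    by (cases x)
  then show "g2_word us x = g2_word vs x"
    using assms by (simp only: g2_word_linear[of us a b] g2_word_linear[of vs a b])
qed

definition root_neg :: "int \<times> int \<Rightarrow> int \<times> int" where
  "root_neg \<beta> = (- fst \<beta>, - snd \<beta>)"

definition G2_roots :: "(int \<times> int) set" where
  "G2_roots = G2_pos \<union> root_neg ` G2_pos"

lemma root_neg_root_neg [simp]: "root_neg (root_neg \<beta>) = \<beta>"
  by (simp add: root_neg_def)

lemma G2_pos_root_neg: "\<beta> \<in> G2_pos \<Longrightarrow> root_neg \<beta> \<notin> G2_pos"
  by (auto simp: G2_pos_def root_neg_def)

lemma G2_roots_eq:
  "G2_roots = {(-1,0), (0,-1), (-1,-1), (-2,-1), (-3,-1), (-3,-2),
               (1,0), (0,1), (1,1), (2,1), (3,1), (3,2)}"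
  by (simp add: G2_roots_def G2_pos_def root_neg_def)

lemma g2_refl_root:
  assumes "\<beta> \<in> G2_roots"
  shows "g2_refl i \<beta> \<in> G2_roots"
proof -
  have "\<forall>\<beta>\<in>G2_roots. g2_refl 0 \<beta> \<in> G2_roots \<and> g2_refl 1 \<beta> \<in> G2_roots"
    by (simp add: G2_roots_eq g2_refl_def)
  with assms show ?thesis
    by (cases "i = 0") (simp_all add: g2_refl_other[of i])
qed

lemma g2_word_root: "\<beta> \<in> G2_roots \<Longrightarrow> g2_word ws \<beta> \<in> G2_roots"
  by (induct ws) (simp_all add: g2_refl_root)

lemma g2_act_fixes:
  assumes "w \<beta> \<in> G2_roots" and "g2_act w \<beta> = \<beta>"
  shows "w \<beta> = \<beta> \<or> w \<beta> = root_neg \<beta>"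
proof -
  from assms(1) consider "w \<beta> \<in> G2_pos" | \<gamma> where "\<gamma> \<in> G2_pos" "w \<beta> = root_neg \<gamma>"
    unfolding G2_roots_def by blast
  then have "\<exists>!\<gamma>. \<gamma> \<in> G2_pos \<and> (\<gamma> = w \<beta> \<or> \<gamma> = root_neg (w \<beta>))"
  proof cases
    case 1
    then show ?thesis
      by (intro ex1I[of _ "w \<beta>"]) (auto dest: G2_pos_root_neg)
  next
    case (2 \<gamma>)
    then show ?thesis
      by (intro ex1I[of _ \<gamma>]) (auto dest: G2_pos_root_neg)
  qed
  then have "g2_act w \<beta> = w \<beta> \<or> g2_act w \<beta> = root_neg (w \<beta>)"
    unfolding g2_act_def root_neg_def[symmetric] by (rule theI'[THEN conjunct2])
  with assms(2) show ?thesis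
    by (auto simp: root_neg_def prod_eq_iff)
qed

definition weyl_words :: "nat list list" where
  "weyl_words = [[], [0], [1], [0,1], [1,0], [0,1,0], [1,0,1], [0,1,0,1], [1,0,1,0],
     [0,1,0,1,0], [1,0,1,0,1], [0,1,0,1,0,1]]"

text \<open>Row i lists, for each k, the index of the reduced word of s_i * weyl_words ! k.\<close>

definition weyl_lmult :: "nat \<Rightarrow> nat list" where
  "weyl_lmult i = (if i = 0 then [1,0,3,2,5,4,7,6,9,8,11,10] else [2,4,0,6,1,8,3,10,5,11,7,9])"

fun weyl_index :: "nat list \<Rightarrow> nat" where
  "weyl_index [] = 0"
| "weyl_index (i # ws) = weyl_lmult i ! weyl_index ws"

lemma weyl_lmult_correct:
  assumes "k < 12"
  shows "weyl_lmult i ! k < 12"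
    and "g2_word (weyl_words ! (weyl_lmult i ! k)) = g2_word (i # weyl_words ! k)"
proof -
  have table: "\<forall>k\<in>{..<12}. weyl_lmult j ! k < 12 \<and>
      g2_word (weyl_words ! (weyl_lmult j ! k)) (1, 0) = g2_word (j # weyl_words ! k) (1, 0) \<and>
      g2_word (weyl_words ! (weyl_lmult j ! k)) (0, 1) = g2_word (j # weyl_words ! k) (0, 1)"
    if "j = 0 \<or> j = 1" for j
    using that by (elim disjE)
      (simp_all add: lessThan_nat_numeral weyl_lmult_def weyl_words_def g2_refl_def)
  have "\<exists>j. (j = 0 \<or> j = 1) \<and> weyl_lmult i = weyl_lmult j \<and> g2_refl i = g2_refl j"
  proof (cases "i = 0")
    case True
    then show ?thesis
      by (intro exI[of _ 0]) simp
  next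
    case False
    then show ?thesis
      by (intro exI[of _ 1]) (simp add: weyl_lmult_def g2_refl_other[OF False])
  qed
  then obtain j where j: "j = 0 \<or> j = 1" "weyl_lmult i = weyl_lmult j" "g2_refl i = g2_refl j"
    by blast
  have row: "weyl_lmult j ! k < 12 \<and>
      g2_word (weyl_words ! (weyl_lmult j ! k)) (1, 0) = g2_word (j # weyl_words ! k) (1, 0) \<and>
      g2_word (weyl_words ! (weyl_lmult j ! k)) (0, 1) = g2_word (j # weyl_words ! k) (0, 1)"
    using bspec[OF table[OF j(1)], of k] assms by simp
  then show "weyl_lmult i ! k < 12"
    by (simp add: j(2))
  from row show "g2_word (weyl_words ! (weyl_lmult i ! k)) = g2_word (i # weyl_words ! k)"
    by (intro g2_word_eqI) (simp_all only: j(2) g2_word_Cons j(3))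
qed

lemma weyl_index_less: "weyl_index ws < 12"
  by (induct ws) (simp_all add: weyl_lmult_correct)

lemma g2_word_weyl_index: "g2_word ws = g2_word (weyl_words ! weyl_index ws)"
proof (induct ws)
  case Nil
  show ?case
    by (simp add: weyl_words_def)
qed (simp add: weyl_lmult_correct weyl_index_less)

lemma weyl_words_inj:
  assumes "k < 12" "l < 12" "g2_word (weyl_words ! k) = g2_word (weyl_words ! l)"
  shows "k = l"
proof -
  have table: "\<forall>k\<in>{..<12}. \<forall>l\<in>{..<12}.
      g2_word (weyl_words ! k) (1, 0) = g2_word (weyl_words ! l) (1, 0) \<longrightarrow>
      g2_word (weyl_words ! k) (0, 1) = g2_word (weyl_words ! l) (0, 1) \<longrightarrow> k = l"
    by (simp add: lessThan_nat_numeral weyl_words_def g2_refl_def)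
  show ?thesis
    using bspec[OF bspec[OF table, of k], of l] assms by simp
qed

text \<open>These are the indices of N_0 = {1, s0, s1 s0 s1 s0 s1, w0} and
  N_1 = {1, s1, s0 s1 s0 s1 s0, w0}, where w0 is the longest element.\<close>

lemma G2_N_weyl_index:
  assumes i: "i \<in> {0, 1}" and n: "g2_word n \<in> G2_N i"
  shows "weyl_index n \<in> (if i = 0 then {0, 1, 10, 11} else {0, 2, 9, 11})"
proof -
  let ?k = "weyl_index n" and ?\<beta> = "g2_simple i"
  have "?\<beta> \<in> G2_roots"
    by (simp add: G2_roots_def G2_pos_def g2_simple_def)
  moreover have "g2_act (g2_word (weyl_words ! ?k)) ?\<beta> = ?\<beta>"
    using n by (simp add: G2_N_def flip: g2_word_weyl_index)
  ultimately have "g2_word (weyl_words ! ?k) ?\<beta> \<in> {?\<beta>, root_neg ?\<beta>}"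
    using g2_act_fixes[of "g2_word (weyl_words ! ?k)" ?\<beta>] g2_word_root by blast
  moreover have table: "\<forall>k\<in>{..<12}. g2_word (weyl_words ! k) ?\<beta> \<in> {?\<beta>, root_neg ?\<beta>} \<longrightarrow>
      k \<in> (if i = 0 then {0, 1, 10, 11} else {0, 2, 9, 11})"
    using i by (elim insertE emptyE)
      (simp_all add: lessThan_nat_numeral weyl_words_def g2_refl_def g2_simple_def root_neg_def)
  ultimately show ?thesis
    using bspec[OF table, of ?k] weyl_index_less[of n] by blast
qed

lemma G2_K_Nil: "g2_word [] \<in> G2_K i"
  by (auto simp: G2_K_def intro: exI[of _ 0])

lemma G2_K_longest: "g2_word [0,1,0,1,0] \<in> G2_K 1"
  by (auto simp: G2_K_def intro: exI[of _ 1])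

lemma left_coset_reps_word:
  assumes "left_coset_reps D N" and "N \<subseteq> G2_W"
  obtains wd wn where "g2_word wd \<in> D" "g2_word wn \<in> N" "g2_word ws = g2_word (wd @ wn)"
proof -
  have "g2_word ws \<in> G2_W"
    unfolding G2_W_def by blast
  with assms(1) have "\<exists>!x. x \<in> D \<and> (\<exists>y\<in>N. g2_word ws = x \<circ> y)"
    unfolding left_coset_reps_def by simp
  then obtain x y where "x \<in> D" "y \<in> N" "g2_word ws = x \<circ> y"
    by (metis ex1_implies_ex)
  moreover have "x \<in> G2_W" "y \<in> G2_W"
    using \<open>x \<in> D\<close> \<open>y \<in> N\<close> assms unfolding left_coset_reps_def by auto
  then obtain wd wn where "x = g2_word wd" "y = g2_word wn"
    unfolding G2_W_def by blast
  ultimately show ?thesis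
    using that by (simp add: g2_word_append)
qed

lemma op_set_rev: "g2_word ws \<in> D \<Longrightarrow> g2_word (rev ws) \<in> op_set D"
  unfolding op_set_def G2_W_def using g2_word_rev_comp by blast

lemma involutions_power_swap:
  fixes a b :: "'a::monoid_mult"
  assumes "a * a = 1" "b * b = 1" "(b * a) ^ (2 * m) = 1"
  shows "(b * a) ^ m = (a * b) ^ m"
proof -
  have cancel: "(a * b) ^ n * (b * a) ^ n = 1" for n
  proof (induct n)
    case (Suc n)
    have "(a * b) ^ Suc n * (b * a) ^ Suc n = (a * b) ^ n * (a * (b * b) * a) * (b * a) ^ n"
      by (simp only: power_Suc2[of "a * b"] power_Suc[of "b * a"] mult.assoc)
    with Suc show ?case
      by (simp add: assms(1,2))
  qed simp
  have "(a * b) ^ m = (a * b) ^ m * (b * a) ^ (m + m)"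
    using assms(3) by (simp add: mult_2)
  also have "\<dots> = (b * a) ^ m"
    by (simp add: power_add mult.assoc[symmetric] cancel)
  finally show ?thesis ..
qed

section \<open>Laurent scalars and their span\<close>

lemma dpow_nat: "dpow d d' (int n) = d ^ n"
  by (simp add: dpow_def)

lemma dpow_neg_nat: "dpow d d' (- int n) = d' ^ n"
  by (simp add: dpow_def)

lemma dpow_zero [simp]: "dpow d d' 0 = 1"
  by (simp add: dpow_def)

lemma dpow_add_one_left:
  assumes "d * d' = 1"
  shows "dpow d d' (k + 1) = d * dpow d d' k"
proof (cases k rule: int_cases)
  case (nonneg n)
  then have "k + 1 = int (Suc n)" by simp
  with nonneg show ?thesis
    by (simp only: dpow_nat power_Suc)
next
  case (neg n)
  then have "k + 1 = - int n" by simp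
  with neg show ?thesis
    by (simp only: dpow_neg_nat power_Suc mult.assoc[symmetric] assms mult_1_left)
qed

lemma dpow_add_one_right:
  assumes "d' * d = 1"
  shows "dpow d d' (k + 1) = dpow d d' k * d"
proof (cases k rule: int_cases)
  case (nonneg n)
  then have "k + 1 = int (Suc n)" by simp
  with nonneg show ?thesis
    by (simp only: dpow_nat power_Suc2)
next
  case (neg n)
  then have "k + 1 = - int n" by simp
  with neg show ?thesis
    by (simp only: dpow_neg_nat power_Suc2 mult.assoc assms mult_1_right)
qed

lemma dpow_diff_one_left:
  assumes "d * d' = 1" "d' * d = 1"
  shows "dpow d d' (k - 1) = d' * dpow d d' k"
proof -
  have "d' * dpow d d' k = (d' * d) * dpow d d' (k - 1)"
    using dpow_add_one_left[OF assms(1), of "k - 1"] by (simp add: mult.assoc)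
  then show ?thesis
    by (simp add: assms(2))
qed

lemma dpow_diff_one_right:
  assumes "d * d' = 1" "d' * d = 1"
  shows "dpow d d' (k - 1) = dpow d d' k * d'"
proof -
  have "dpow d d' k * d' = dpow d d' (k - 1) * (d * d')"
    using dpow_add_one_right[OF assms(2), of "k - 1"] by (simp add: mult.assoc)
  then show ?thesis
    by (simp add: assms(1))
qed

lemma dpow_add:
  assumes "d * d' = 1" "d' * d = 1"
  shows "dpow d d' a * dpow d d' b = dpow d d' (a + b)"
proof (induct b arbitrary: a rule: int_induct[where k = 0])
  case (step1 b)
  have "dpow d d' a * dpow d d' (b + 1) = (dpow d d' a * d) * dpow d d' b"
    by (simp add: dpow_add_one_left[OF assms(1)] mult.assoc)
  also have "\<dots> = dpow d d' (a + (b + 1))"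
    by (simp add: dpow_add_one_right[OF assms(2), symmetric] step1 algebra_simps)
  finally show ?case .
next
  case (step2 b)
  have "dpow d d' a * dpow d d' (b - 1) = (dpow d d' a * d') * dpow d d' b"
    by (simp add: dpow_diff_one_left[OF assms] mult.assoc)
  also have "\<dots> = dpow d d' (a + (b - 1))"
    by (simp add: dpow_diff_one_right[OF assms, symmetric] step2 algebra_simps)
  finally show ?case .
qed simp

lemma dpow_in_laurent_scalars: "dpow d d' k \<in> laurent_scalars d d'"
proof -
  have "d ^ n \<in> laurent_scalars d d'" "d' ^ n \<in> laurent_scalars d d'" for n
    by (induct n) (auto intro: laurent_scalars.intros)
  then show ?thesis
    by (simp add: dpow_def)
qed

lemma zero_in_laurent_scalars: "0 \<in> laurent_scalars d d'"
  using laurent_scalars.add[OF laurent_scalars.one laurent_scalars.neg[OF laurent_scalars.one]]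
  by simp

lemma laurent_scalars_commute:
  assumes central: "\<And>x. d * x = x * d" and "d * d' = 1" "d' * d = 1"
    and "s \<in> laurent_scalars d d'"
  shows "s * x = x * s"
  using assms(4)
proof (induct s arbitrary: x rule: laurent_scalars.induct)
  case d'
  have "d' * x = d' * (x * d) * d'"
    by (simp add: mult.assoc assms(2))
  also have "\<dots> = x * d'"
    by (simp add: central[of x, symmetric] mult.assoc[symmetric] assms(3))
  finally show ?case .
next
  case (mult s t)
  then show ?case
    by (metis mult.assoc)
qed (simp_all add: central distrib_left distrib_right)

definition laurent_span :: "'a::ring_1 \<Rightarrow> 'a \<Rightarrow> (nat \<Rightarrow> 'a) \<Rightarrow> nat \<Rightarrow> 'a set" where
  "laurent_span d d' b n = {\<Sum>j<n. c j * b j | c. \<forall>j<n. c j \<in> laurent_scalars d d'}"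

lemma laurent_span_zero: "0 \<in> laurent_span d d' b n"
  unfolding laurent_span_def using zero_in_laurent_scalars
  by (auto intro!: exI[of _ "\<lambda>_. 0"])

lemma laurent_span_add:
  assumes "x \<in> laurent_span d d' b n" "y \<in> laurent_span d d' b n"
  shows "x + y \<in> laurent_span d d' b n"
proof -
  from assms obtain c c' where
    "\<forall>j<n. c j \<in> laurent_scalars d d'" "\<forall>j<n. c' j \<in> laurent_scalars d d'"
    "x = (\<Sum>j<n. c j * b j)" "y = (\<Sum>j<n. c' j * b j)"
    unfolding laurent_span_def by blast
  then show ?thesis
    unfolding laurent_span_def
    by (auto intro!: exI[of _ "\<lambda>j. c j + c' j"] laurent_scalars.add simp: distrib_right sum.distrib)
qed

lemma laurent_span_uminus:
  assumes "x \<in> laurent_span d d' b n"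
  shows "- x \<in> laurent_span d d' b n"
proof -
  from assms obtain c where "\<forall>j<n. c j \<in> laurent_scalars d d'" "x = (\<Sum>j<n. c j * b j)"
    unfolding laurent_span_def by blast
  then show ?thesis
    unfolding laurent_span_def
    by (auto intro!: exI[of _ "\<lambda>j. - c j"] laurent_scalars.neg simp: sum_negf)
qed

lemma laurent_span_scale:
  assumes "s \<in> laurent_scalars d d'" "x \<in> laurent_span d d' b n"
  shows "s * x \<in> laurent_span d d' b n"
proof -
  from assms(2) obtain c where "\<forall>j<n. c j \<in> laurent_scalars d d'" "x = (\<Sum>j<n. c j * b j)"
    unfolding laurent_span_def by blast
  with assms(1) show ?thesis
    unfolding laurent_span_def
    by (auto intro!: exI[of _ "\<lambda>j. s * c j"] laurent_scalars.mult simp: sum_distrib_left mult.assoc)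
qed

lemma laurent_span_sum:
  "finite A \<Longrightarrow> (\<And>a. a \<in> A \<Longrightarrow> f a \<in> laurent_span d d' b n) \<Longrightarrow> sum f A \<in> laurent_span d d' b n"
  by (induct A rule: finite_induct) (simp_all add: laurent_span_zero laurent_span_add)

lemma laurent_span_basis:
  assumes "j < n"
  shows "b j \<in> laurent_span d d' b n"
proof -
  have "(\<Sum>l<n. (if l = j then 1 else 0) * b l) = (\<Sum>l<n. if l = j then b l else 0)"
    by (intro sum.cong) auto
  then have "b j = (\<Sum>l<n. (if l = j then 1 else 0) * b l)"
    using assms by simp
  then show ?thesis
    unfolding laurent_span_def
    by (auto intro!: exI[of _ "\<lambda>l. if l = j then 1 else 0"]
        laurent_scalars.one zero_in_laurent_scalars)
qed

lemma laurent_span_mult: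
  assumes central: "\<And>s x. s \<in> laurent_scalars d d' \<Longrightarrow> s * x = x * s"
    and basis_mult: "\<And>j l. j < n \<Longrightarrow> l < n \<Longrightarrow> b j * b l \<in> laurent_span d d' b n"
    and x: "x \<in> laurent_span d d' b n" and y: "y \<in> laurent_span d d' b n"
  shows "x * y \<in> laurent_span d d' b n"
proof -
  from x obtain c where c: "\<forall>j<n. c j \<in> laurent_scalars d d'" "x = (\<Sum>j<n. c j * b j)"
    unfolding laurent_span_def by blast
  from y obtain c' where c': "\<forall>l<n. c' l \<in> laurent_scalars d d'" "y = (\<Sum>l<n. c' l * b l)"
    unfolding laurent_span_def by blast
  have "c j * b j * (c' l * b l) = c j * (c' l * (b j * b l))" if "l < n" for j l
    using central[of "c' l" "b j"] c'(1) that by (metis mult.assoc)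
  then have "x * y = (\<Sum>j<n. \<Sum>l<n. c j * (c' l * (b j * b l)))"
    unfolding c(2) c'(2) sum_product by (intro sum.cong refl) simp
  also have "\<dots> \<in> laurent_span d d' b n"
  proof -
    have "c j * (c' l * (b j * b l)) \<in> laurent_span d d' b n" if "j < n" "l < n" for j l
      using that c(1) c'(1) basis_mult laurent_span_scale by metis
    then show ?thesis
      by (intro laurent_span_sum) auto
  qed
  finally show ?thesis .
qed

section \<open>Monomials and the 39 normal forms\<close>

lemma brM_mult:
  "x \<in> brM d d' r0 r1 e0 e1 \<Longrightarrow> y \<in> brM d d' r0 r1 e0 e1 \<Longrightarrow> x * y \<in> brM d d' r0 r1 e0 e1"
  by (induct rule: brM.induct) (simp_all add: mult.assoc brM.gen)

lemma alg_word_Nil [simp]: "alg_word r0 r1 [] = 1"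
  by (simp add: alg_word_def)

lemma alg_word_Cons [simp]:
  "alg_word r0 r1 (i # ws) = (if i = 0 then r0 else r1) * alg_word r0 r1 ws"
  by (simp add: alg_word_def)

lemma alg_word_append: "alg_word r0 r1 (us @ vs) = alg_word r0 r1 us * alg_word r0 r1 vs"
  by (simp add: alg_word_def)

lemma alg_word_in_brM: "alg_word r0 r1 ws \<in> brM d d' r0 r1 e0 e1"
  by (induct ws) (auto intro: brM.intros)

datatype brm_word = Weyl_word "nat list" | E_word nat "nat list" "nat list"

definition brm_basis :: "brm_word list" where
  "brm_basis = [Weyl_word [], Weyl_word [0], Weyl_word [1], E_word 0 [] [], E_word 1 [] [],
    Weyl_word [0,1], E_word 1 [0] [], Weyl_word [1,0], E_word 0 [1] [], E_word 0 [] [1],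
    E_word 0 [] [1,0], E_word 1 [] [0], E_word 0 [0,1] [], Weyl_word [0,1,0], E_word 1 [0] [0],
    Weyl_word [1,0,1], E_word 1 [1,0] [], E_word 0 [1] [1], E_word 0 [1] [1,0], E_word 1 [] [0,1],
    E_word 1 [] [0,1,0,1,0], E_word 0 [0,1] [1], E_word 0 [0,1] [1,0], Weyl_word [0,1,0,1],
    E_word 1 [0,1,0] [], E_word 1 [0] [0,1], E_word 1 [1,0,1,0] [], Weyl_word [1,0,1,0],
    E_word 1 [1,0] [0], E_word 1 [] [0,1,0], E_word 1 [] [0,1,0,1], Weyl_word [0,1,0,1,0],
    E_word 1 [0,1,0] [0], E_word 1 [0] [0,1,0], E_word 1 [0] [0,1,0,1], Weyl_word [1,0,1,0,1],
    E_word 1 [1,0] [0,1], Weyl_word [0,1,0,1,0,1], E_word 1 [0,1,0] [0,1]]"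

text \<open>Entry j of row g is a pair (k, l) such that the generator g (in the order r0, r1, e0, e1)
  times basis element j equals d^k times basis element l.\<close>

definition brm_lmult_table :: "nat \<Rightarrow> (int \<times> nat) list" where
  "brm_lmult_table g = [
    [(0,1), (0,0), (0,5), (0,3), (0,6), (0,2), (0,4), (0,13), (0,12), (0,9), (0,10), (0,14), (0,8),
     (0,7), (0,11), (0,23), (0,24), (0,21), (0,22), (0,25), (0,26), (0,17), (0,18), (0,15), (0,16),
     (0,19), (0,20), (0,31), (0,32), (0,33), (0,34), (0,27), (0,28), (0,29), (0,30), (0,37), (0,38),
     (0,35), (0,36)],
    [(0,2), (0,7), (0,0), (0,8), (0,4), (0,15), (0,16), (0,1), (0,3), (0,17), (0,18), (0,11), (0,12),
     (0,27), (0,28), (0,5), (0,6), (0,9), (0,10), (0,19), (0,20), (0,21), (0,22), (0,35), (0,26),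
     (0,36), (0,24), (0,13), (0,14), (0,29), (0,30), (0,37), (0,34), (0,38), (0,32), (0,23), (0,25),
     (0,31), (0,33)],
    [(0,3), (0,3), (0,9), (3,3), (0,10), (0,9), (0,10), (0,10), (2,3), (3,9), (3,10), (0,9), (2,3),
     (0,10), (0,9), (0,10), (1,10), (2,9), (2,10), (0,3), (0,10), (2,9), (2,10), (0,10), (1,10),
     (0,3), (0,10), (0,9), (1,9), (0,3), (0,9), (0,9), (1,9), (0,3), (0,9), (0,3), (1,3), (0,3),
     (1,3)],
    [(0,4), (0,11), (0,4), (0,12), (1,4), (0,19), (0,20), (0,11), (0,12), (0,21), (0,22), (1,11),
     (1,12), (0,29), (0,30), (0,19), (0,20), (0,21), (0,22), (1,19), (1,20), (1,21), (1,22), (0,30),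
     (0,4), (0,29), (0,4), (0,29), (0,30), (1,29), (1,30), (0,20), (0,11), (0,19), (0,11), (0,30),
     (0,29), (0,20), (0,19)]] ! g"

lemma brm_basis_E_word: "\<forall>j\<in>{..<39}. \<forall>i u v. brm_basis ! j = E_word i u v \<longrightarrow> i \<in> {0, 1}"
  by (simp add: lessThan_nat_numeral brm_basis_def)

locale br_g2_algebra =
  fixes d d' r0 r1 e0 e1 :: "'a::ring_1"
  assumes rels: "br_G2_rels d d' r0 r1 e0 e1"
begin

abbreviation rword :: "nat list \<Rightarrow> 'a" where
  "rword \<equiv> alg_word r0 r1"

abbreviation e :: "nat \<Rightarrow> 'a" where
  "e i \<equiv> if i = 0 then e0 else e1"

abbreviation \<delta> :: "int \<Rightarrow> 'a" where
  "\<delta> \<equiv> dpow d d'"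

lemma d_d': "d * d' = 1" and d'_d: "d' * d = 1" and d_central: "d * x = x * d"
  using rels unfolding br_G2_rels_def by auto

lemma laurent_scalar_commute: "s \<in> laurent_scalars d d' \<Longrightarrow> s * x = x * s"
  using laurent_scalars_commute[OF d_central d_d' d'_d] .

lemma \<delta>_commute: "\<delta> k * x = x * \<delta> k"
  by (rule laurent_scalar_commute[OF dpow_in_laurent_scalars])

lemma \<delta>_mult: "\<delta> a * (\<delta> b * y) = \<delta> (a + b) * y"
  by (simp add: mult.assoc[symmetric] dpow_add[OF d_d' d'_d])

lemma \<delta>_add_one: "d * (\<delta> k * y) = \<delta> (k + 1) * y"
  and \<delta>_diff_one: "d' * (\<delta> k * y) = \<delta> (k - 1) * y"
  using \<delta>_mult[of 1 k y] \<delta>_mult[of "-1" k y] by (simp_all add: dpow_def add.commute)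

lemma \<delta>_pull:
  "r0 * (\<delta> k * y) = \<delta> k * (r0 * y)" "r1 * (\<delta> k * y) = \<delta> k * (r1 * y)"
  "e0 * (\<delta> k * y) = \<delta> k * (e0 * y)" "e1 * (\<delta> k * y) = \<delta> k * (e1 * y)"
  by (metis mult.assoc \<delta>_commute)+

text \<open>The relations are stated in front of an arbitrary right factor y, so that they apply as
  rewrite rules inside right-nested products.\<close>

lemma
  shows r0_r0: "r0 * (r0 * y) = y"
    and r1_r1: "r1 * (r1 * y) = y"
    and r0_e0: "r0 * (e0 * y) = e0 * y"
    and e0_r0: "e0 * (r0 * y) = e0 * y"
    and r1_e1: "r1 * (e1 * y) = e1 * y"
    and e1_r1: "e1 * (r1 * y) = e1 * y"
    and e0_e0: "e0 * (e0 * y) = \<delta> 3 * (e0 * y)"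
    and e1_e1: "e1 * (e1 * y) = \<delta> 1 * (e1 * y)"
    and r0_e1_e0: "r0 * (e1 * (e0 * y)) = r1 * (e0 * y)"
    and e0_e1_r0: "e0 * (e1 * (r0 * y)) = e0 * (r1 * y)"
    and e1_r0_e1_r0_e1: "e1 * (r0 * (e1 * (r0 * (e1 * y)))) = e1 * y"
    and e1_r0_e1_r0_r1: "e1 * (r0 * (e1 * (r0 * (r1 * y)))) = e1 * (r0 * (r1 * (r0 * y)))"
    and e0_r1_e0: "e0 * (r1 * (e0 * y)) = \<delta> 2 * (e0 * y)"
    and r1_r0_e1_r0_e1: "r1 * (r0 * (e1 * (r0 * (e1 * y)))) = r0 * (r1 * (r0 * (e1 * y)))"
  using rels unfolding br_G2_rels_def by (simp_all add: mult.assoc[symmetric] dpow_def)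

lemma r0_r1_e0: "r0 * (r1 * (e0 * y)) = e1 * (e0 * y)"
  by (simp only: r0_e1_e0[symmetric] r0_r0)

lemma r1_r0_r1_r0_e1: "r1 * (r0 * (r1 * (r0 * (e1 * y)))) = r0 * (e1 * (r0 * (e1 * y)))"
  by (simp only: r1_r0_e1_r0_e1[symmetric] r1_r1)

lemma e0_e1_e0: "e0 * (e1 * (e0 * y)) = \<delta> 2 * (e0 * y)"
proof -
  have "e0 * (e1 * (e0 * y)) = e0 * (r0 * (e1 * (e0 * y)))"
    by (rule e0_r0[symmetric])
  also have "\<dots> = \<delta> 2 * (e0 * y)"
    by (simp only: r0_e1_e0 e0_r1_e0)
  finally show ?thesis .
qed

lemma e1_r0_r1_r0_e1: "e1 * (r0 * (r1 * (r0 * (e1 * y)))) = e1 * y"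
proof -
  have "e1 * (r0 * (r1 * (r0 * (e1 * y)))) = e1 * (r1 * (r0 * (e1 * (r0 * (e1 * y)))))"
    by (simp only: r1_r0_e1_r0_e1)
  also have "\<dots> = e1 * y"
    by (simp only: e1_r1 e1_r0_e1_r0_e1)
  finally show ?thesis .
qed

lemma e0_r1_r0: "e0 * (r1 * (r0 * y)) = e0 * (e1 * y)"
proof -
  have "e0 * (r1 * (r0 * y)) = e0 * (e1 * (r0 * (r0 * y)))"
    by (simp only: e0_e1_r0)
  then show ?thesis
    by (simp only: r0_r0)
qed

lemma e1_r0_r1_r0_r1: "e1 * (r0 * (r1 * (r0 * (r1 * y)))) = e1 * (r0 * (e1 * (r0 * y)))"
proof -
  have "e1 * (r0 * (e1 * (r0 * y))) = e1 * (r0 * (e1 * (r0 * (r1 * (r1 * y)))))"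
    by (simp only: r1_r1)
  then show ?thesis
    by (simp only: e1_r0_e1_r0_r1)
qed

lemma r1_r0_e1_r0_r1_r0:
  "r1 * (r0 * (e1 * (r0 * (r1 * (r0 * y))))) = r0 * (r1 * (r0 * (e1 * (r0 * (r1 * y)))))"
proof -
  have "r1 * (r0 * (e1 * (r0 * (r1 * (r0 * y)))))
      = r1 * (r0 * (e1 * (r0 * (e1 * (r0 * (r1 * y))))))"
    by (simp only: e1_r0_e1_r0_r1)
  then show ?thesis
    by (simp only: r1_r0_e1_r0_e1)
qed

lemma braid: "r1 * (r0 * (r1 * (r0 * (r1 * (r0 * y))))) = r0 * (r1 * (r0 * (r1 * (r0 * (r1 * y)))))"
proof -
  have "(r1 * r0) ^ 3 = (r0 * r1) ^ 3"
    using rels unfolding br_G2_rels_def by (intro involutions_power_swap[where m = 3]) simp_all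
  then have "(r1 * r0) ^ 3 * y = (r0 * r1) ^ 3 * y"
    by simp
  then show ?thesis
    by (simp add: eval_nat_numeral mult.assoc)
qed

lemmas relation_rules =
  r0_r0 r1_r1 r0_e0 e0_r0 r1_e1 e1_r1 e0_e0 e1_e1 r0_e1_e0 e0_e1_r0 e1_r0_e1_r0_e1 e1_r0_e1_r0_r1
  e0_r1_e0 r1_r0_e1_r0_e1 r0_r1_e0 r1_r0_r1_r0_e1 e0_e1_e0 e1_r0_r1_r0_e1 e0_r1_r0 e1_r0_r1_r0_r1
  r1_r0_e1_r0_r1_r0 braid

text \<open>Rewriting with these rules, also at the end of a word (y = 1), and collecting the powers
  of d in front decides all the word identities below.\<close>

lemmas word_normalize = relation_rules relation_rules[where y = 1, simplified] \<delta>_pull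
  \<delta>_pull[where y = 1, simplified] \<delta>_mult mult.assoc

lemma rword_weyl_lmult:
  assumes "k < 12"
  shows "rword (weyl_words ! (weyl_lmult i ! k))
           = (if i = 0 then r0 else r1) * rword (weyl_words ! k)"
proof -
  have "\<forall>k\<in>{..<12}. rword (weyl_words ! (weyl_lmult 0 ! k)) = r0 * rword (weyl_words ! k)"
    "\<forall>k\<in>{..<12}. rword (weyl_words ! (weyl_lmult 1 ! k)) = r1 * rword (weyl_words ! k)"
    by (simp_all add: lessThan_nat_numeral weyl_lmult_def weyl_words_def word_normalize)
  with assms show ?thesis
    by (cases "i = 0") (simp_all add: weyl_lmult_def)
qed

lemma rword_weyl_index: "rword ws = rword (weyl_words ! weyl_index ws)"
proof (induct ws)
  case Nil
  show ?case
    by (simp add: weyl_words_def)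
next
  case (Cons i ws)
  then show ?case
    by (simp add: rword_weyl_lmult weyl_index_less)
qed

lemma rword_cong:
  assumes "g2_word us = g2_word vs"
  shows "rword us = rword vs"
proof -
  have "weyl_index us = weyl_index vs"
    using assms weyl_index_less by (intro weyl_words_inj) (simp_all flip: g2_word_weyl_index)
  then show ?thesis
    by (metis rword_weyl_index)
qed

lemma stabilizer_absorb:
  assumes i: "i \<in> {0, 1}" and n: "g2_word n \<in> G2_N i"
  obtains v v' where "g2_word v \<in> G2_K i" "rword n * e i = e i * rword v"
    and "g2_word v' \<in> G2_K i" "e i * rword (rev n) = e i * rword v'"
proof -
  let ?k = "weyl_index n"
  have k: "?k \<in> (if i = 0 then {0, 1, 10, 11} else {0, 2, 9, 11})"
    using G2_N_weyl_index[OF i n] .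
  have left: "rword n = rword (weyl_words ! ?k)"
    by (rule rword_weyl_index)
  have right: "rword (rev n) = rword (rev (weyl_words ! ?k))"
    by (intro rword_cong g2_word_rev_cong g2_word_weyl_index)
  have "\<forall>k\<in>{0, 1, 10, 11}.
      rword (weyl_words ! k) * e0 = e0 \<and> e0 * rword (rev (weyl_words ! k)) = e0"
    "\<forall>k\<in>{0, 2}. rword (weyl_words ! k) * e1 = e1 \<and> e1 * rword (rev (weyl_words ! k)) = e1"
    "\<forall>k\<in>{9, 11}. rword (weyl_words ! k) * e1 = e1 * rword [0,1,0,1,0] \<and>
       e1 * rword (rev (weyl_words ! k)) = e1 * rword [0,1,0,1,0]"
    by (simp_all add: weyl_words_def word_normalize)
  with i k show ?thesis
    using that[of "[]" "[]"] that[of "[0,1,0,1,0]" "[0,1,0,1,0]"] G2_K_Nil G2_K_longest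
    unfolding left right by auto
qed

lemma e_word_coset_form:
  assumes i: "i \<in> {0, 1}" and D: "left_coset_reps (D i) (G2_N i)"
  shows "\<exists>wu wv ww. g2_word wu \<in> D i \<and> g2_word wv \<in> G2_K i \<and> g2_word ww \<in> op_set (D i) \<and>
           rword u * e i * rword v = rword wu * e i * rword wv * rword ww"
proof -
  have N: "G2_N i \<subseteq> G2_W"
    by (auto simp: G2_N_def)
  obtain wd wn where wd: "g2_word wd \<in> D i" and wn: "g2_word wn \<in> G2_N i"
    and u: "g2_word u = g2_word (wd @ wn)"
    using left_coset_reps_word[OF D N] .
  obtain kn where kn: "rword wn * e i = e i * rword kn"
    using stabilizer_absorb[OF i wn] by blast
  obtain wd' wn' where wd': "g2_word wd' \<in> D i" and wn': "g2_word wn' \<in> G2_N i"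
    and "g2_word (rev (kn @ v)) = g2_word (wd' @ wn')"
    using left_coset_reps_word[OF D N] .
  then have "g2_word (kn @ v) = g2_word (rev wn' @ rev wd')"
    using g2_word_rev_cong by fastforce
  then have knv: "rword kn * rword v = rword (rev wn') * rword (rev wd')"
    by (metis rword_cong alg_word_append)
  obtain kv where kv: "g2_word kv \<in> G2_K i" "e i * rword (rev wn') = e i * rword kv"
    using stabilizer_absorb[OF i wn'] by blast
  have "rword u * e i * rword v = rword wd * (rword wn * e i) * rword v"
    using rword_cong[OF u] by (simp add: alg_word_append mult.assoc)
  also have "\<dots> = rword wd * (e i * rword (rev wn')) * rword (rev wd')"
    using knv by (simp add: kn mult.assoc)
  also have "\<dots> = rword wd * e i * rword kv * rword (rev wd')"
    by (simp add: kv(2) mult.assoc)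
  finally show ?thesis
    using wd kv(1) op_set_rev[OF wd'] by blast
qed

fun brm_eval :: "brm_word \<Rightarrow> 'a" where
  "brm_eval (Weyl_word ws) = rword ws"
| "brm_eval (E_word i u v) = rword u * e i * rword v"

definition brm_gen :: "nat \<Rightarrow> 'a" where
  "brm_gen g = [r0, r1, e0, e1] ! g"

lemma brm_lmult_table_correct:
  assumes "g < 4" and "j < 39"
  shows "snd (brm_lmult_table g ! j) < 39"
    and "brm_gen g * brm_eval (brm_basis ! j)
           = \<delta> (fst (brm_lmult_table g ! j)) * brm_eval (brm_basis ! snd (brm_lmult_table g ! j))"
proof -
  have row: "\<forall>j\<in>{..<39}. snd (brm_lmult_table h ! j) < 39 \<and>
     brm_gen h * brm_eval (brm_basis ! j)
       = \<delta> (fst (brm_lmult_table h ! j)) * brm_eval (brm_basis ! snd (brm_lmult_table h ! j))"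
    if "h \<in> {0, 1, 2, 3}" for h
    using that by (elim insertE emptyE)
      (simp_all add: lessThan_nat_numeral brm_lmult_table_def brm_basis_def brm_gen_def
        word_normalize)
  have "g \<in> {0, 1, 2, 3}" "j \<in> {..<39}"
    using assms by auto
  then show "snd (brm_lmult_table g ! j) < 39"
    and "brm_gen g * brm_eval (brm_basis ! j)
           = \<delta> (fst (brm_lmult_table g ! j)) * brm_eval (brm_basis ! snd (brm_lmult_table g ! j))"
    using row by blast+
qed

lemma brM_normal_form:
  assumes "x \<in> brM d d' r0 r1 e0 e1"
  shows "\<exists>k j. j < 39 \<and> x = \<delta> k * brm_eval (brm_basis ! j)"
  using assms
proof (induct rule: brM.induct)
  case one
  show ?case
    by (intro exI[of _ 0] exI[of _ 0]) (simp add: brm_basis_def)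
next
  case (gen x g)
  then obtain k j where j: "j < 39" and x: "x = \<delta> k * brm_eval (brm_basis ! j)"
    by blast
  have "\<exists>k j. j < 39 \<and> brm_gen a * x = \<delta> k * brm_eval (brm_basis ! j)" if "a < 4" for a
  proof -
    let ?t = "brm_lmult_table a ! j"
    have "brm_gen a * x = \<delta> k * (brm_gen a * brm_eval (brm_basis ! j))"
      unfolding x by (metis mult.assoc \<delta>_commute)
    also have "\<dots> = \<delta> (k + fst ?t) * brm_eval (brm_basis ! snd ?t)"
      by (simp only: brm_lmult_table_correct(2)[OF that j] \<delta>_mult)
    finally show ?thesis
      using brm_lmult_table_correct(1)[OF that j] by blast
  qed
  moreover have "g = d \<or> g = d' \<or> g = brm_gen 0 \<or> g = brm_gen 1 \<or> g = brm_gen 2 \<or> g = brm_gen 3"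
    using gen(3) by (auto simp: brm_gen_def)
  moreover have "d * x = \<delta> (k + 1) * brm_eval (brm_basis ! j)"
    "d' * x = \<delta> (k - 1) * brm_eval (brm_basis ! j)"
    using x by (simp_all add: \<delta>_add_one \<delta>_diff_one)
  ultimately show ?case
    using j by fastforce
qed

lemma brm_basis_in_brM: "brm_eval w \<in> brM d d' r0 r1 e0 e1"
proof -
  have "e0 \<in> brM d d' r0 r1 e0 e1" "e1 \<in> brM d d' r0 r1 e0 e1"
    using brM.gen[OF brM.one, of e0] brM.gen[OF brM.one, of e1] by simp_all
  then show ?thesis
    by (cases w) (auto intro!: brM_mult alg_word_in_brM)
qed

lemma brM_forms:
  assumes D: "\<forall>i\<in>{0,1}. left_coset_reps (D i) (G2_N i)"
    and x: "x \<in> brM d d' r0 r1 e0 e1"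
  shows "(\<exists>i\<in>{0::nat,1}. \<exists>wu wv ww k.
            g2_word wu \<in> D i \<and> g2_word wv \<in> G2_K i \<and> g2_word ww \<in> op_set (D i) \<and>
            x = \<delta> k * rword wu * e i * rword wv * rword ww)
         \<or> (\<exists>wa k. x = \<delta> k * rword wa)"
proof -
  obtain k j where j: "j < 39" and x: "x = \<delta> k * brm_eval (brm_basis ! j)"
    using brM_normal_form[OF x] by blast
  show ?thesis
  proof (cases "brm_basis ! j")
    case (Weyl_word ws)
    then show ?thesis
      using x by auto
  next
    case (E_word i u v)
    then have i: "i \<in> {0, 1}"
      using brm_basis_E_word j by auto
    then obtain wu wv ww
      where "g2_word wu \<in> D i" "g2_word wv \<in> G2_K i" "g2_word ww \<in> op_set (D i)"
      and eq: "rword u * e i * rword v = rword wu * e i * rword wv * rword ww"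
      using e_word_coset_form[of i D u v] D by blast
    moreover have "x = \<delta> k * rword wu * e i * rword wv * rword ww"
      using x E_word eq by (simp add: mult.assoc)
    ultimately show ?thesis
      using i by blast
  qed
qed

lemma gen_alg_subset_span:
  "gen_alg d d' r0 r1 e0 e1 \<subseteq> laurent_span d d' (\<lambda>j. brm_eval (brm_basis ! j)) 39"
proof
  let ?S = "laurent_span d d' (\<lambda>j. brm_eval (brm_basis ! j)) 39"
  have brM_span: "y \<in> ?S" if y: "y \<in> brM d d' r0 r1 e0 e1" for y
  proof -
    obtain k j where "j < 39" "y = \<delta> k * brm_eval (brm_basis ! j)"
      using brM_normal_form[OF y] by blast
    then show ?thesis
      using laurent_span_basis[of j 39 "\<lambda>j. brm_eval (brm_basis ! j)" d d']
      by (simp add: laurent_span_scale dpow_in_laurent_scalars)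
  qed
  have mult: "y * z \<in> ?S" if "y \<in> ?S" "z \<in> ?S" for y z
  proof (rule laurent_span_mult[OF laurent_scalar_commute _ that])
    fix j l
    show "brm_eval (brm_basis ! j) * brm_eval (brm_basis ! l) \<in> ?S"
      by (intro brM_span brM_mult brm_basis_in_brM)
  qed
  fix x
  assume "x \<in> gen_alg d d' r0 r1 e0 e1"
  then show "x \<in> ?S"
  proof (induct rule: gen_alg.induct)
    case (base g)
    have "g \<in> brM d d' r0 r1 e0 e1"
    proof (cases "g = 1")
      case False
      with base have "g \<in> {d, d', r0, r1, e0, e1}"
        by simp
      from brM.gen[OF brM.one this] show ?thesis
        by simp
    qed (simp add: brM.one)
    then show ?case
      by (rule brM_span)
  qed (auto intro: laurent_span_uminus laurent_span_add mult)
qed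

end

theorem lemma9p7:
  fixes d d' r0 r1 e0 e1 :: "'a::ring_1"
    and D :: "nat \<Rightarrow> (int \<times> int \<Rightarrow> int \<times> int) set"
  assumes rels: "br_G2_rels d d' r0 r1 e0 e1"
    and D: "\<forall>i\<in>{0,1}. left_coset_reps (D i) (G2_N i)"
  shows "(\<forall>x\<in>brM d d' r0 r1 e0 e1.
            (\<exists>i\<in>{0::nat,1}. \<exists>wu wv ww k.
               g2_word wu \<in> D i \<and> g2_word wv \<in> G2_K i \<and> g2_word ww \<in> op_set (D i) \<and>
               x = dpow d d' k * alg_word r0 r1 wu * (if i = 0 then e0 else e1)
                   * alg_word r0 r1 wv * alg_word r0 r1 ww)
          \<or> (\<exists>wa k. x = dpow d d' k * alg_word r0 r1 wa))
       \<and> (\<exists>b :: nat \<Rightarrow> 'a. \<forall>x\<in>gen_alg d d' r0 r1 e0 e1.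
            \<exists>c. (\<forall>j<39. c j \<in> laurent_scalars d d') \<and> x = (\<Sum>j<39. c j * b j))"
proof -
  interpret br_g2_algebra d d' r0 r1 e0 e1
    by (rule br_g2_algebra.intro[OF rels])
  have span: "\<forall>x\<in>gen_alg d d' r0 r1 e0 e1. \<exists>c. (\<forall>j<39. c j \<in> laurent_scalars d d') \<and>
          x = (\<Sum>j<39. c j * brm_eval (brm_basis ! j))"
    using gen_alg_subset_span unfolding laurent_span_def by blast
  show ?thesis
    using brM_forms[OF D] span
    by (intro conjI ballI) (blast, rule exI[of _ "\<lambda>j. brm_eval (brm_basis ! j)"], rule span)
qed

end
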